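(* Let $A\in\mathbb{C}^{n\times n}$ be nonsingular, $b\in\mathbb{C}^n$, $x_0\in\mathbb{C}^n$ and $r_0=b-Ax_0$. Let $W\in\mathbb{C}^{n\times k}$ have linearly independent columns spanning a subspace $\mathcal{W}$. Define $Q_3=W(W^HA^HAW)^{-1}W^H$, $P_4=I_n-Q_3A^HA$, $P_5=I_n-AQ_3A^H$, $\hat A=P_5A$, $\hat r_0=P_5r_0$, and let $\mathcal{K}=\mathcal{K}_m(\hat A,\hat r_0)$. Then the following two sets of conditions are equivalent: (i) $x_m\in x_0+\mathcal{W}+\mathcal{K}$ and $r_m=b-Ax_m\perp (A\mathcal{W}+A\mathcal{K})$; (ii) $\tilde x_m\in x_0+\mathcal{K}$ and $\tilde r_m:=P_5(b-A\tilde x_m)\perp A\mathcal{K}$, in the following sense: if $\tilde x_m$ satisfies (ii), then $x_m:=P_4\tilde x_m+Q_3A^Hb$ satisfies (i) and $r_m=\tilde r_m$; conversely, if $x_m$ satisfies (i), then there exists $\tilde x_m$ satisfying (ii) with $x_m=P_4\tilde x_m+Q_3A^Hb$ and $r_m=\tilde r_m$.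
   Context: $\mathcal{K}_m(B,v)=\mathrm{span}(v,Bv,\dots,B^{m-1}v)$ denotes the Krylov subspace. Orthogonality $\perp$ is with respect to the canonical Euclidean inner product $\langle x,y\rangle=y^Hx$ on $\mathbb{C}^n$; for subspaces $\mathcal{U}$, $A\mathcal{U}=\{Au: u\in\mathcal{U}\}$. ${}^H$ denotes conjugate transpose. *)

theory Defs
  imports "HOL-Analysis.Analysis"
begin

definition conj_transpose :: "complex^'n^'m \<Rightarrow> complex^'m^'n" where
  "conj_transpose M = (\<chi> i j. cnj (M $ j $ i))"

definition cinner :: "complex^'n \<Rightarrow> complex^'n \<Rightarrow> complex" where
  "cinner x y = (\<Sum>i\<in>UNIV. x $ i * cnj (y $ i))"

definition orth_to :: "complex^'n \<Rightarrow> (complex^'n) set \<Rightarrow> bool" where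
  "orth_to x S \<longleftrightarrow> (\<forall>y\<in>S. cinner x y = 0)"

definition krylov :: "nat \<Rightarrow> complex^'n^'n \<Rightarrow> complex^'n \<Rightarrow> (complex^'n) set" where
  "krylov m B v = vec.span {((\<lambda>x. B *v x) ^^ i) v | i. i < m}"

definition col_space :: "complex^'k^'n \<Rightarrow> (complex^'n) set" where
  "col_space W = {W *v y | y. True}"

definition set_plus_sub :: "(complex^'n) set \<Rightarrow> (complex^'n) set \<Rightarrow> (complex^'n) set" where
  "set_plus_sub U V = {u + v | u v. u \<in> U \<and> v \<in> V}"

definition mat_image :: "complex^'n^'m \<Rightarrow> (complex^'n) set \<Rightarrow> (complex^'m) set" where
  "mat_image A U = (\<lambda>u. A *v u) ` U"

end

theory Submission
  imports Defs
begin

text \<open>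
  With \<open>M = A W\<close>, the Gram matrix \<open>M\<^sup>H M\<close> is invertible, so \<open>A Q\<^sub>3 A\<^sup>H\<close> is the
  orthogonal projector onto the range of \<open>M\<close>: \<open>P\<^sub>5\<close> maps into its orthogonal complement
  and \<open>Q\<^sub>3 A\<^sup>H M = W\<close>. For any \<open>Q\<close> one has \<open>P\<^sub>4 x + Q A\<^sup>H b = x + Q A\<^sup>H (b - A x)\<close>
  and \<open>b - A (P\<^sub>4 x + Q A\<^sup>H b) = P\<^sub>5 (b - A x)\<close>, which gives the forward direction.
  Conversely, if \<open>x\<^sub>m = x\<^sub>0 + W y + k\<close> has residual orthogonal to the range of \<open>M\<close>, then
  \<open>x\<^sub>0 + k\<close> is the required iterate, since \<open>Q\<^sub>3 A\<^sup>H (b - A (x\<^sub>0 + k)) = W y\<close>.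
\<close>

lemma matrix_inv_left:
  fixes G :: "'a::field^'n^'n"
  assumes "invertible G"
  shows "matrix_inv G ** G = mat 1"
  using assms someI_ex[of "\<lambda>B. G ** B = mat 1 \<and> B ** G = mat 1"]
  unfolding matrix_inv_def invertible_def by blast

lemma matrix_inv_right:
  fixes G :: "'a::field^'n^'n"
  assumes "invertible G"
  shows "G ** matrix_inv G = mat 1"
  using assms someI_ex[of "\<lambda>B. G ** B = mat 1 \<and> B ** G = mat 1"]
  unfolding matrix_inv_def invertible_def by blast

lemma conj_transpose_matrix_mul:
  "conj_transpose (B ** C) = conj_transpose C ** conj_transpose B"
  by (simp add: conj_transpose_def matrix_matrix_mult_def vec_eq_iff mult.commute)

lemma cinner_matrix_vector_mult_right:
  fixes B :: "complex^'n^'m"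
  shows "cinner x (B *v y) = cinner (conj_transpose B *v x) y"
proof -
  have "cinner x (B *v y) = (\<Sum>i\<in>UNIV. \<Sum>j\<in>UNIV. x $ i * cnj (B $ i $ j) * cnj (y $ j))"
    unfolding cinner_def matrix_vector_mult_def
    by (simp add: sum_distrib_left mult.assoc)
  also have "\<dots> = (\<Sum>j\<in>UNIV. \<Sum>i\<in>UNIV. x $ i * cnj (B $ i $ j) * cnj (y $ j))"
    by (rule sum.swap)
  also have "\<dots> = cinner (conj_transpose B *v x) y"
    unfolding cinner_def matrix_vector_mult_def conj_transpose_def
    by (simp add: sum_distrib_left sum_distrib_right mult_ac)
  finally show ?thesis .
qed

lemma cinner_self_eq_0_iff: "cinner x x = 0 \<longleftrightarrow> x = 0"
proof
  assume "cinner x x = 0"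
  moreover have "cinner x x = of_real (\<Sum>i\<in>UNIV. (cmod (x $ i))\<^sup>2)"
    by (simp only: cinner_def of_real_sum complex_norm_square)
  ultimately have "complex_of_real (\<Sum>i\<in>UNIV. (cmod (x $ i))\<^sup>2) = 0"
    by (simp only:)
  then have "(\<Sum>i\<in>UNIV. (cmod (x $ i))\<^sup>2) = 0"
    by (simp only: of_real_eq_0_iff)
  then show "x = 0"
    by (simp add: sum_nonneg_eq_0_iff vec_eq_iff)
qed (simp add: cinner_def)

lemma cinner_zero_left [simp]: "cinner 0 x = 0"
  by (simp add: cinner_def)

lemma cinner_add_right: "cinner x (y + z) = cinner x y + cinner x z"
  by (simp add: cinner_def sum.distrib algebra_simps)

lemma invertible_gram_matrix:
  fixes M :: "complex^'k^'n"
  assumes "\<forall>y. M *v y = 0 \<longrightarrow> y = 0"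
  shows "invertible (conj_transpose M ** M)"
  unfolding invertible_left_inverse matrix_left_invertible_ker
proof (intro allI impI)
  fix y assume "(conj_transpose M ** M) *v y = 0"
  then have "cinner (M *v y) (M *v y) = 0"
    unfolding cinner_matrix_vector_mult_right[of "M *v y" M] matrix_vector_mul_assoc
    by simp
  then show "y = 0"
    using assms by (simp add: cinner_self_eq_0_iff)
qed

lemma orth_to_col_space_iff:
  "orth_to r (col_space M) \<longleftrightarrow> conj_transpose M *v r = 0"
proof
  assume "orth_to r (col_space M)"
  then have "cinner r (M *v (conj_transpose M *v r)) = 0"
    unfolding orth_to_def col_space_def by blast
  then show "conj_transpose M *v r = 0"
    unfolding cinner_matrix_vector_mult_right[of r M] cinner_self_eq_0_iff .
qed (auto simp: orth_to_def col_space_def cinner_matrix_vector_mult_right)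

lemma mat_image_col_space: "mat_image A (col_space W) = col_space (A ** W)"
  unfolding mat_image_def col_space_def
  by (auto simp: matrix_vector_mul_assoc[symmetric])

lemma orth_to_set_plus_sub:
  assumes "orth_to r U" and "orth_to r V"
  shows "orth_to r (set_plus_sub U V)"
  using assms by (auto simp: orth_to_def set_plus_sub_def cinner_add_right)

lemma orth_to_set_plus_sub_iff:
  assumes "0 \<in> U" and "0 \<in> V"
  shows "orth_to r (set_plus_sub U V) \<longleftrightarrow> orth_to r U \<and> orth_to r V"
proof
  assume orth: "orth_to r (set_plus_sub U V)"
  have "U \<subseteq> set_plus_sub U V" and "V \<subseteq> set_plus_sub U V"
    using assms unfolding set_plus_sub_def by force+
  with orth show "orth_to r U \<and> orth_to r V"
    unfolding orth_to_def by blast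
qed (simp add: orth_to_set_plus_sub)

lemma col_space_zero: "0 \<in> col_space W"
  unfolding col_space_def by (metis (mono_tags) matrix_vector_mult_0_right mem_Collect_eq)

lemma krylov_zero: "0 \<in> krylov m B v"
  unfolding krylov_def by (rule vec.span_zero)

lemma corrected_iterate_eq:
  fixes A :: "'a::ring_1^'n^'m" and C :: "'a^'m^'n" and Q :: "'a^'n^'n"
  shows "(mat 1 - Q ** C ** A) *v x + Q *v (C *v b) = x + Q *v (C *v (b - A *v x))"
  by (simp add: matrix_vector_mult_diff_rdistrib matrix_vector_mult_diff_distrib
      matrix_vector_mul_assoc[symmetric])

lemma residual_of_corrected_iterate:
  fixes A :: "'a::ring_1^'n^'m" and C :: "'a^'m^'n" and Q :: "'a^'n^'n"
  shows "b - A *v ((mat 1 - Q ** C ** A) *v x + Q *v (C *v b))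
    = (mat 1 - A ** Q ** C) *v (b - A *v x)"
  by (simp add: matrix_vector_mult_diff_rdistrib matrix_vector_mult_diff_distrib
      matrix_vector_right_distrib matrix_vector_mul_assoc[symmetric])

locale augmented_krylov =
  fixes A :: "complex^'n^'n" and W :: "complex^'k^'n"
  assumes invertible_A: "invertible A"
    and W_injective: "\<forall>y. W *v y = 0 \<longrightarrow> y = 0"
begin

definition Q3 :: "complex^'n^'n" where
  "Q3 = W ** matrix_inv (conj_transpose W ** conj_transpose A ** A ** W) ** conj_transpose W"

definition P4 :: "complex^'n^'n" where
  "P4 = mat 1 - Q3 ** conj_transpose A ** A"

definition P5 :: "complex^'n^'n" where
  "P5 = mat 1 - A ** Q3 ** conj_transpose A"

lemma gram_eq:
  "conj_transpose W ** conj_transpose A ** A ** W = conj_transpose (A ** W) ** (A ** W)"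
  by (simp add: conj_transpose_matrix_mul matrix_mul_assoc)

lemma invertible_gram: "invertible (conj_transpose W ** conj_transpose A ** A ** W)"
proof -
  have "\<forall>y. (A ** W) *v y = 0 \<longrightarrow> y = 0"
    using W_injective inj_matrix_vector_mult[OF invertible_A]
    by (metis injD matrix_vector_mul_assoc matrix_vector_mult_0_right)
  then show ?thesis
    unfolding gram_eq by (rule invertible_gram_matrix)
qed

lemma Q3_in_col_space: "Q3 *v z \<in> col_space W"
  unfolding Q3_def col_space_def by (auto simp: matrix_vector_mul_assoc[symmetric])

lemma Q3_left_inverse: "Q3 *v (conj_transpose A *v (A *v (W *v y))) = W *v y"
proof -
  let ?G = "conj_transpose W ** conj_transpose A ** A ** W"
  have "Q3 ** conj_transpose A ** A ** W = W ** (matrix_inv ?G ** ?G)"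
    by (simp add: Q3_def matrix_mul_assoc)
  then have "(Q3 ** conj_transpose A ** A ** W) *v y = W *v y"
    by (simp add: matrix_inv_left[OF invertible_gram])
  then show ?thesis
    by (simp add: matrix_vector_mul_assoc matrix_mul_assoc)
qed

lemma Q3_mult_orth_eq_0:
  assumes "conj_transpose (A ** W) *v r = 0"
  shows "Q3 *v (conj_transpose A *v r) = 0"
  using assms by (simp add: Q3_def conj_transpose_matrix_mul matrix_vector_mul_assoc[symmetric])

lemma P5_range_orth: "conj_transpose (A ** W) *v (P5 *v z) = 0"
proof -
  let ?G = "conj_transpose W ** conj_transpose A ** A ** W"
  have "conj_transpose (A ** W) ** A ** Q3 = ?G ** matrix_inv ?G ** conj_transpose W"
    by (simp add: Q3_def conj_transpose_matrix_mul matrix_mul_assoc)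
  then have "(conj_transpose (A ** W) ** A ** Q3) *v v = conj_transpose W *v v" for v
    by (simp add: matrix_inv_right[OF invertible_gram])
  then show ?thesis
    by (simp add: P5_def conj_transpose_matrix_mul matrix_vector_mult_diff_rdistrib
        matrix_vector_mult_diff_distrib matrix_vector_mul_assoc[symmetric])
qed

lemma augmented_of_deflated:
  assumes xt: "xt \<in> (\<lambda>u. x0 + u) ` K"
    and orth: "orth_to (P5 *v (b - A *v xt)) (mat_image A K)"
  defines "xm \<equiv> P4 *v xt + Q3 *v (conj_transpose A *v b)"
  shows "xm \<in> (\<lambda>u. x0 + u) ` set_plus_sub (col_space W) K"
    and "orth_to (b - A *v xm) (set_plus_sub (mat_image A (col_space W)) (mat_image A K))"
    and "b - A *v xm = P5 *v (b - A *v xt)"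
proof -
  obtain k where k: "k \<in> K" "xt = x0 + k"
    using xt by blast
  let ?w = "Q3 *v (conj_transpose A *v (b - A *v xt))"
  have "xm = x0 + (?w + k)"
    unfolding xm_def P4_def corrected_iterate_eq k(2) by (simp add: algebra_simps)
  moreover have "?w + k \<in> set_plus_sub (col_space W) K"
    unfolding set_plus_sub_def using Q3_in_col_space k(1) by blast
  ultimately show "xm \<in> (\<lambda>u. x0 + u) ` set_plus_sub (col_space W) K"
    by blast
  show residual: "b - A *v xm = P5 *v (b - A *v xt)"
    unfolding xm_def P4_def P5_def by (rule residual_of_corrected_iterate)
  have "orth_to (P5 *v (b - A *v xt)) (mat_image A (col_space W))"
    unfolding mat_image_col_space orth_to_col_space_iff by (rule P5_range_orth)
  from this orth
  show "orth_to (b - A *v xm) (set_plus_sub (mat_image A (col_space W)) (mat_image A K))"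
    unfolding residual by (rule orth_to_set_plus_sub)
qed

lemma deflated_of_augmented:
  assumes "0 \<in> K"
    and xm: "xm \<in> (\<lambda>u. x0 + u) ` set_plus_sub (col_space W) K"
    and orth: "orth_to (b - A *v xm) (set_plus_sub (mat_image A (col_space W)) (mat_image A K))"
  obtains xt where "xt \<in> (\<lambda>u. x0 + u) ` K"
    and "orth_to (P5 *v (b - A *v xt)) (mat_image A K)"
    and "xm = P4 *v xt + Q3 *v (conj_transpose A *v b)"
    and "b - A *v xm = P5 *v (b - A *v xt)"
proof -
  obtain y k where k: "k \<in> K" and xm_eq: "xm = x0 + (W *v y + k)"
    using xm unfolding set_plus_sub_def col_space_def by blast
  define xt where "xt = x0 + k"
  have zeros: "0 \<in> mat_image A (col_space W)" "0 \<in> mat_image A K"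
    using col_space_zero \<open>0 \<in> K\<close> unfolding mat_image_def by force+
  have orth_AW_image: "orth_to (b - A *v xm) (mat_image A (col_space W))"
    and orth_AK: "orth_to (b - A *v xm) (mat_image A K)"
    using orth orth_to_set_plus_sub_iff[OF zeros] by blast+
  from orth_AW_image have orth_AW: "conj_transpose (A ** W) *v (b - A *v xm) = 0"
    unfolding mat_image_col_space orth_to_col_space_iff .
  have "b - A *v xt = (b - A *v xm) + A *v (W *v y)"
    unfolding xm_eq xt_def by (simp add: matrix_vector_right_distrib)
  then have "Q3 *v (conj_transpose A *v (b - A *v xt))
      = Q3 *v (conj_transpose A *v (b - A *v xm)) + Q3 *v (conj_transpose A *v (A *v (W *v y)))"
    by (simp only: matrix_vector_right_distrib)
  also have "\<dots> = W *v y"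
    by (simp add: Q3_mult_orth_eq_0[OF orth_AW] Q3_left_inverse)
  finally have correction: "Q3 *v (conj_transpose A *v (b - A *v xt)) = W *v y" .
  have xm_from_xt: "xm = P4 *v xt + Q3 *v (conj_transpose A *v b)"
    unfolding P4_def corrected_iterate_eq correction unfolding xm_eq xt_def by (simp add: ac_simps)
  moreover have residual: "b - A *v xm = P5 *v (b - A *v xt)"
    unfolding xm_from_xt P4_def P5_def by (rule residual_of_corrected_iterate)
  moreover have "xt \<in> (\<lambda>u. x0 + u) ` K"
    unfolding xt_def using k by blast
  ultimately show thesis
    using orth_AK that by simp
qed

end

theorem proposition1:
  fixes A :: "complex^'n^'n" and W :: "complex^'k^'n"
    and b x0 :: "complex^'n" and m :: nat
  assumes "invertible A"
    and "\<forall>y. W *v y = 0 \<longrightarrow> y = 0"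
  defines "r0 \<equiv> b - A *v x0"
    and "Q3 \<equiv> W ** matrix_inv (conj_transpose W ** conj_transpose A ** A ** W) ** conj_transpose W"
  defines "P4 \<equiv> mat 1 - Q3 ** conj_transpose A ** A"
    and "P5 \<equiv> mat 1 - A ** Q3 ** conj_transpose A"
  defines "Ahat \<equiv> P5 ** A" and "rhat0 \<equiv> P5 *v r0"
  defines "K \<equiv> krylov m Ahat rhat0" and "Wsp \<equiv> col_space W"
  shows "(\<forall>xt. (xt \<in> (\<lambda>u. x0 + u) ` K \<and> orth_to (P5 *v (b - A *v xt)) (mat_image A K)) \<longrightarrow>
            (let xm = P4 *v xt + Q3 *v (conj_transpose A *v b) in
              xm \<in> (\<lambda>u. x0 + u) ` set_plus_sub Wsp K
              \<and> orth_to (b - A *v xm) (set_plus_sub (mat_image A Wsp) (mat_image A K))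
              \<and> b - A *v xm = P5 *v (b - A *v xt)))
       \<and> (\<forall>xm. (xm \<in> (\<lambda>u. x0 + u) ` set_plus_sub Wsp K
               \<and> orth_to (b - A *v xm) (set_plus_sub (mat_image A Wsp) (mat_image A K))) \<longrightarrow>
            (\<exists>xt. xt \<in> (\<lambda>u. x0 + u) ` K \<and> orth_to (P5 *v (b - A *v xt)) (mat_image A K)
                  \<and> xm = P4 *v xt + Q3 *v (conj_transpose A *v b)
                  \<and> b - A *v xm = P5 *v (b - A *v xt)))"
proof -
  interpret D: augmented_krylov A W
    using assms(1,2) by unfold_locales
  have Q3: "Q3 = D.Q3"
    unfolding Q3_def D.Q3_def ..
  have projectors: "P4 = D.P4" "P5 = D.P5"
    unfolding P4_def P5_def D.P4_def D.P5_def Q3 by simp_all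
  have "0 \<in> K"
    unfolding K_def by (rule krylov_zero)
  show ?thesis
    unfolding Q3 projectors Wsp_def Let_def
    using D.augmented_of_deflated D.deflated_of_augmented[OF \<open>0 \<in> K\<close>] by metis
qed

end
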